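(* Let $\mathbb{H}\in\{\mathbb{R},\mathbb{C}\}$ and consider $\bm{y}=\bm{A}\bm{x}+\bm{w}$ with $\bm{A}\in\mathbb{H}^{m\times n}$ having i.i.d. entries $\mathcal{N}(0,1/m)$ (resp. $\mathcal{CN}(0,1/m)$), $\bm{x}\sim\mathcal{N}(\bm 0,\sigma_x^2\bm I)$ (resp. $\mathcal{CN}(\bm 0,\sigma_x^2\bm I)$), and $\bm{w}\sim\mathcal{N}(\bm 0,\sigma_w^2\bm I)$ (resp. $\mathcal{CN}(\bm 0,\sigma_w^2\bm I)$) with $\sigma_w^2=\delta\sigma_0^2$, where $\delta=m/n$ and $\sigma_0^2>0$ is constant. Let the asymptotic MSE of the MMSE estimator be $$\mathrm{Err}(\delta)=\frac{\delta}{2}\left[\left(-\sigma_w^2+c\sigma_x^2\right)+\sqrt{\left(\sigma_w^2+c\sigma_x^2\right)^2+4\sigma_w^2\sigma_x^2}\right],\qquad c=\frac{1-\delta}{\delta},\ \sigma_w^2=\delta\sigma_0^2,$$ and let $\delta^\dagger$ be the value of $\delta>0$ minimizing $\mathrm{Err}(\delta)$. Then $\delta^{\dagger}<2$. Moreover, if $\sigma_x^2<2\sigma_0^2$, then $\delta^{\dagger}<1$.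
   Context: $\delta=m/n$ is the normalized number of measurements; the asymptotic regime is $m,n\to\infty$ with $m/n\to\delta$, and the MSE is $\lim_{n\to\infty}\frac1n\mathbb{E}\|\bm x-\hat{\bm x}\|^2$. *)

theory Defs
  imports Complex_Main
begin

definition mmse_err :: "real \<Rightarrow> real \<Rightarrow> real \<Rightarrow> real" where
  "mmse_err sx2 s02 \<delta> =
     (let sw2 = \<delta> * s02; c = (1 - \<delta>) / \<delta> in
      \<delta> / 2 * ((- sw2 + c * sx2) + sqrt ((sw2 + c * sx2)\<^sup>2 + 4 * sw2 * sx2)))"

end

theory Submission
  imports Defs
begin

text \<open>Multiplying out the factor \<delta> turns Err(\<delta>) into a function that is smooth on
  the whole real line. Its derivative at \<delta> \<ge> 1 is positive as soon as
  2 \<delta>^2 \<sigma>0^2 + (\<delta> - 2) \<sigma>x^2 > 0, which holds for every \<delta> \<ge> 2, and for every \<delta> \<ge> 1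
  when \<sigma>x^2 < 2 \<sigma>0^2. An interior minimiser has derivative zero, so it lies below these
  thresholds.\<close>

definition mmse_err_poly :: "real \<Rightarrow> real \<Rightarrow> real \<Rightarrow> real" where
  "mmse_err_poly x s t =
     (- (t\<^sup>2 * s) + (1 - t) * x + sqrt ((t\<^sup>2 * s + (1 - t) * x)\<^sup>2 + 4 * t^3 * s * x)) / 2"

lemma mmse_err_eq_poly:
  fixes x s t :: real
  assumes "t > 0"
  shows "mmse_err x s t = mmse_err_poly x s t"
proof -
  have "t\<^sup>2 * ((t * s + (1 - t) / t * x)\<^sup>2 + 4 * (t * s) * x)
        = (t\<^sup>2 * s + (1 - t) * x)\<^sup>2 + 4 * t^3 * s * x"
    using assms by (simp add: field_simps power2_eq_square power3_eq_cube)
  then have "t * sqrt ((t * s + (1 - t) / t * x)\<^sup>2 + 4 * (t * s) * x)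
        = sqrt ((t\<^sup>2 * s + (1 - t) * x)\<^sup>2 + 4 * t^3 * s * x)"
    using assms by (metis real_sqrt_mult real_sqrt_abs power2_eq_square abs_of_pos)
  moreover have "t * (- (t * s) + (1 - t) / t * x) = - (t\<^sup>2 * s) + (1 - t) * x"
    using assms by (simp add: field_simps power2_eq_square)
  ultimately show ?thesis
    unfolding mmse_err_def mmse_err_poly_def Let_def by (simp add: distrib_left)
qed

lemma has_real_derivative_mmse_err_poly:
  fixes x s t :: real
  defines "Q \<equiv> (t\<^sup>2 * s + (1 - t) * x)\<^sup>2 + 4 * t^3 * s * x"
    and "L \<equiv> (t\<^sup>2 * s + (1 - t) * x) * (2 * t * s - x) + 6 * t\<^sup>2 * s * x"
  assumes "Q > 0"
  shows "(mmse_err_poly x s has_real_derivative (L / sqrt Q - (2 * t * s + x)) / 2) (at t)"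
proof -
  have "((\<lambda>t. (t\<^sup>2 * s + (1 - t) * x)\<^sup>2 + 4 * t^3 * s * x) has_real_derivative 2 * L) (at t)"
    unfolding L_def
    by (auto intro!: derivative_eq_intros simp: algebra_simps power2_eq_square)
  from DERIV_chain2[OF DERIV_real_sqrt[OF \<open>Q > 0\<close>[unfolded Q_def]] this]
  have radical: "((\<lambda>t. sqrt ((t\<^sup>2 * s + (1 - t) * x)\<^sup>2 + 4 * t^3 * s * x))
      has_real_derivative L / sqrt Q) (at t)"
    by (simp add: Q_def field_simps)
  have polynomial: "((\<lambda>t. - (t\<^sup>2 * s) + (1 - t) * x) has_real_derivative - (2 * t * s + x)) (at t)"
    by (auto intro!: derivative_eq_intros simp: algebra_simps)
  from DERIV_cdivide[OF DERIV_add[OF polynomial radical], of 2] show ?thesis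
    unfolding mmse_err_poly_def by (rule DERIV_cong) (simp add: algebra_simps)
qed

lemma mmse_err_poly_derivative_pos:
  fixes x s t :: real
  defines "Q \<equiv> (t\<^sup>2 * s + (1 - t) * x)\<^sup>2 + 4 * t^3 * s * x"
    and "L \<equiv> (t\<^sup>2 * s + (1 - t) * x) * (2 * t * s - x) + 6 * t\<^sup>2 * s * x"
  assumes x: "x > 0" and s: "s > 0" and t: "t \<ge> 1"
    and threshold: "2 * t\<^sup>2 * s + (t - 2) * x > 0"
  shows "Q > 0" and "L / sqrt Q - (2 * t * s + x) > 0"
proof -
  show Q: "Q > 0"
    unfolding Q_def using x s t by (intro add_nonneg_pos) auto
  have "L = 2 * t^3 * s\<^sup>2 + 3 * t\<^sup>2 * s * x + 2 * t * s * x + (t - 1) * x\<^sup>2"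
    unfolding L_def by (simp add: algebra_simps power2_eq_square power3_eq_cube)
  moreover have "t^3 * s\<^sup>2 > 0" and "t\<^sup>2 * s * x > 0" and "t * s * x > 0"
    using x s t by simp_all
  moreover have "(t - 1) * x\<^sup>2 \<ge> 0"
    using t by simp
  ultimately have L: "L > 0"
    by linarith
  \<comment> \<open>the squared form of the inequality factors through the threshold\<close>
  have "L\<^sup>2 - (2 * t * s + x)\<^sup>2 * Q = 4 * t * s * x\<^sup>2 * (2 * t\<^sup>2 * s + (t - 2) * x)"
    unfolding L_def Q_def by (simp add: algebra_simps power2_eq_square power3_eq_cube)
  also have "\<dots> > 0"
    using x s t threshold by simp
  finally have "sqrt ((2 * t * s + x)\<^sup>2 * Q) < sqrt (L\<^sup>2)"
    by (intro real_sqrt_less_mono) simp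
  then have "(2 * t * s + x) * sqrt Q < L"
    using L x s t by (simp add: real_sqrt_mult)
  then show "L / sqrt Q - (2 * t * s + x) > 0"
    using Q by (simp add: field_simps)
qed

lemma mmse_err_minimiser_threshold:
  fixes x s d :: real
  assumes x: "x > 0" and s: "s > 0" and d: "d \<ge> 1"
    and min: "\<forall>\<delta>>0. mmse_err x s d \<le> mmse_err x s \<delta>"
  shows "2 * d\<^sup>2 * s + (d - 2) * x \<le> 0"
proof (rule ccontr)
  assume "\<not> ?thesis"
  then have threshold: "2 * d\<^sup>2 * s + (d - 2) * x > 0"
    by simp
  note pos = mmse_err_poly_derivative_pos[OF x s d threshold]
  have "\<forall>y. \<bar>d - y\<bar> < d \<longrightarrow> mmse_err_poly x s d \<le> mmse_err_poly x s y"
    using min d by (auto simp: mmse_err_eq_poly)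
  from DERIV_local_min[OF has_real_derivative_mmse_err_poly[OF pos(1)] _ this] d pos(2)
  show False
    by simp
qed

theorem proposition1:
  fixes sx2 s02 d :: real
  assumes "sx2 > 0" and "s02 > 0"
    and "d > 0"
    and "\<forall>\<delta>>0. mmse_err sx2 s02 d \<le> mmse_err sx2 s02 \<delta>"
  shows "d < 2 \<and> (sx2 < 2 * s02 \<longrightarrow> d < 1)"
proof -
  have threshold: "2 * d\<^sup>2 * s02 + (d - 2) * sx2 \<le> 0" if "d \<ge> 1"
    using mmse_err_minimiser_threshold[OF assms(1,2) that assms(4)] .
  have "d < 2"
  proof (rule ccontr)
    assume "\<not> d < 2"
    then have "2 * d\<^sup>2 * s02 > 0" and "(d - 2) * sx2 \<ge> 0"
      using assms(1,2) by auto
    then show False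
      using threshold \<open>\<not> d < 2\<close> by linarith
  qed
  moreover have "d < 1" if "sx2 < 2 * s02"
  proof (rule ccontr)
    assume "\<not> d < 1"
    then have "2 * s02 \<le> 2 * d\<^sup>2 * s02" and "- sx2 \<le> (d - 2) * sx2"
      using assms(1,2) by (simp_all add: one_le_power algebra_simps)
    then show False
      using threshold \<open>\<not> d < 1\<close> that by linarith
  qed
  ultimately show ?thesis
    by blast
qed

end
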